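(* Let $D$ be a Hadamard plan of index $n$, let $p$ be a prime with $p\equiv1\pmod n$, and let $F$ be the periodic codebook of length $p$ from $D$. Then for $s\in\mathbb F_p$, \[\sum_{f\in F}P_{f,f}(s)=\begin{cases}(n-1)(p-1)&s=0,\\ 1-n&s\ne0,\end{cases}\] so that $\sum_{s\in\mathbb F_p^*}\left|\sum_{f\in F}P_{f,f}(s)\right|^2=(p-1)(n-1)^2$, $\sum_{s\in\mathbb F_p}\left|\sum_{f\in F}P_{f,f}(s)\right|^2=p(p-1)(n-1)^2$, and $\mathrm{PCDF}(F)=p/(p-1)$.
   Context: For periodic sequences $f,g:\mathbb Z/\ell\mathbb Z\to\mathbb C$ and $s\in\mathbb Z/\ell\mathbb Z$, the periodic crosscorrelation is $P_{f,g}(s)=\sum_{j\in\mathbb Z/\ell\mathbb Z}f_{j+s}\overline{g_j}$. For nonzero $f,g$, $\mathrm{PCDF}(f,g)=\sum_{s}|P_{f,g}(s)|^2/(P_{f,f}(0)P_{g,g}(0))$, and for a finite set $F$ of such sequences of common length, $\mathrm{PCDF}(F)=|F|^{-2}\sum_{f,g\in F}\mathrm{PCDF}(f,g)$. For each prime $p$, $\alpha_p$ is a fixed primitive element of $\mathbb F_p$ and $\mathbb F_p^{*n}$ is the subgroup of $n$th powers. A cyclotomic pattern of index $n$ is $d:\mathbb Z/n\mathbb Z\to\mathbb C$; the periodic sequence of length $p$ from $d$ has $f_0=0$, $f_h=d_k$ for $h\in\alpha_p^k\mathbb F_p^{*n}$. The periodic codebook of length $p$ from a set $D$ of patterns is the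 set of periodic sequences of length $p$ from the patterns in $D$. A Hadamard plan of index $n$ is a set of exactly $n-1$ cyclotomic patterns of index $n$ that are unimodular (entries of modulus $1$), balanced (entries sum to $0$), and pairwise orthogonal in $\mathbb C^n$. *)

theory Defs
  imports "HOL-Analysis.Analysis" "HOL-Number_Theory.Number_Theory"
begin

(* Periodic sequences of length l are functions nat => complex, read on indices 0..<l,
   with index arithmetic taken mod l. *)
definition pcorr :: "nat \<Rightarrow> (nat \<Rightarrow> complex) \<Rightarrow> (nat \<Rightarrow> complex) \<Rightarrow> nat \<Rightarrow> complex" where
  "pcorr l f g s = (\<Sum>j<l. f ((j + s) mod l) * cnj (g j))"

definition pcdf_pair :: "nat \<Rightarrow> (nat \<Rightarrow> complex) \<Rightarrow> (nat \<Rightarrow> complex) \<Rightarrow> complex" where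
  "pcdf_pair l f g =
     (\<Sum>s<l. complex_of_real ((cmod (pcorr l f g s))^2)) / (pcorr l f f 0 * pcorr l g g 0)"

definition pcdf_set :: "nat \<Rightarrow> (nat \<Rightarrow> complex) set \<Rightarrow> complex" where
  "pcdf_set l F = (\<Sum>f\<in>F. \<Sum>g\<in>F. pcdf_pair l f g) / (of_nat (card F))^2"

definition cyc_coset :: "nat \<Rightarrow> nat \<Rightarrow> nat \<Rightarrow> nat \<Rightarrow> nat set" where
  "cyc_coset p n \<alpha> k = {h \<in> {1..<p}. \<exists>x. [h = \<alpha>^k * x^n] (mod p) \<and> \<not> p dvd x}"

definition cyc_pattern :: "nat \<Rightarrow> (nat \<Rightarrow> complex) \<Rightarrow> bool" where
  "cyc_pattern n d \<longleftrightarrow> (\<forall>k\<ge>n. d k = 0)"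

definition cyc_seq :: "nat \<Rightarrow> nat \<Rightarrow> nat \<Rightarrow> (nat \<Rightarrow> complex) \<Rightarrow> nat \<Rightarrow> complex" where
  "cyc_seq p n \<alpha> d h =
     (if h mod p = 0 then 0 else d (THE k. k < n \<and> h mod p \<in> cyc_coset p n \<alpha> k))"

definition periodic_codebook :: "nat \<Rightarrow> nat \<Rightarrow> nat \<Rightarrow> (nat \<Rightarrow> complex) set \<Rightarrow> (nat \<Rightarrow> complex) set" where
  "periodic_codebook p n \<alpha> D = (\<lambda>d. cyc_seq p n \<alpha> d) ` D"

definition hadamard_plan :: "nat \<Rightarrow> (nat \<Rightarrow> complex) set \<Rightarrow> bool" where
  "hadamard_plan n D \<longleftrightarrow>
     finite D \<and> card D = n - 1 \<and>
     (\<forall>d\<in>D. cyc_pattern n d) \<and>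
     (\<forall>d\<in>D. \<forall>k<n. cmod (d k) = 1) \<and>
     (\<forall>d\<in>D. (\<Sum>k<n. d k) = 0) \<and>
     (\<forall>d\<in>D. \<forall>e\<in>D. d \<noteq> e \<longrightarrow> (\<Sum>k<n. d k * cnj (e k)) = 0)"

end

theory Submission imports Defs "Jordan_Normal_Form.Determinant" begin

(* Adjoining the all-ones pattern to a Hadamard plan of index n gives an n x n matrix with
   orthogonal rows of squared norm n, hence orthogonal columns: the sum over d in D of
   d_a * conj d_b is n [a = b] - 1.  The sequence built from d is f_h = d (dlog h mod n), where dlog
   is the discrete logarithm to the base alpha.  So the sum of the autocorrelations at shift s is
   n times the number of j with j, j + s nonzero and in the same cyclotomic class, minus the number
   of j with j, j + s nonzero.  For s <> 0 the map j |-> (j + s) / j is a bijection from the former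
   set onto the n-th powers other than 1, of which there are (p - 1) / n - 1.  The PCDF then follows
   from the identity sum_s |P_{f,g}(s)|^2 = sum_s P_{f,f}(s) conj P_{g,g}(s). *)

lemma orthogonal_rows_imp_orthogonal_cols:
  fixes V :: "nat \<Rightarrow> nat \<Rightarrow> complex" and c :: complex
  assumes rows: "\<And>r s. r < n \<Longrightarrow> s < n \<Longrightarrow> (\<Sum>k<n. V r k * cnj (V s k)) = (if r = s then c else 0)"
    and "c \<noteq> 0" and "a < n" and "b < n"
  shows "(\<Sum>r<n. cnj (V r a) * V r b) = (if a = b then c else 0)"
proof -
  define A where "A = mat n n (\<lambda>(r,k). V r k / c)"
  define B where "B = mat n n (\<lambda>(k,s). cnj (V s k))"
  have A: "A \<in> carrier_mat n n" and B: "B \<in> carrier_mat n n" unfolding A_def B_def by auto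
  have "A * B = 1\<^sub>m n"
  proof (rule eq_matI)
    fix i j assume "i < dim_row (1\<^sub>m n)" "j < dim_col (1\<^sub>m n)"
    then have i: "i < n" and j: "j < n" by auto
    have "(A * B) $$ (i,j) = (\<Sum>k<n. V i k * cnj (V j k)) / c"
      using i j unfolding A_def B_def by (simp add: scalar_prod_def atLeast0LessThan sum_divide_distrib)
    then show "(A * B) $$ (i,j) = 1\<^sub>m n $$ (i,j)" using rows[OF i j] \<open>c \<noteq> 0\<close> i j by simp
  qed (auto simp: A_def B_def)
  then have "B * A = 1\<^sub>m n" using mat_mult_left_right_inverse[OF A B] by blast
  moreover have "(B * A) $$ (a,b) = (\<Sum>r<n. cnj (V r a) * V r b) / c"
    using assms(3,4) unfolding A_def B_def by (simp add: scalar_prod_def atLeast0LessThan sum_divide_distrib)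
  ultimately show ?thesis using assms(2-4) by (auto simp: field_simps split: if_splits)
qed

lemma unimodular_mult_cnj: "cmod z = 1 \<Longrightarrow> z * cnj z = 1"
  using complex_norm_square[of z] by simp

lemma hadamard_plan_extended_orthogonal:
  assumes H: "hadamard_plan n D"
    and v: "v \<in> insert (\<lambda>_. 1) D" and w: "w \<in> insert (\<lambda>_. 1) D"
  shows "(\<Sum>k<n. v k * cnj (w k)) = (if v = w then of_nat n else 0)"
proof (cases "v = w")
  case True
  have "v k * cnj (v k) = 1" if "k < n" for k
    using v H that unimodular_mult_cnj unfolding hadamard_plan_def by auto
  then show ?thesis using True by simp
next
  case False
  have bal: "(\<Sum>k<n. d k) = 0" if "d \<in> D" for d
    using H that unfolding hadamard_plan_def by blast
  have orth: "(\<Sum>k<n. d k * cnj (e k)) = 0" if "d \<in> D" "e \<in> D" "d \<noteq> e" for d e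
    using H that unfolding hadamard_plan_def by blast
  have "v \<in> D \<and> w \<in> D \<or> v = (\<lambda>_. 1) \<and> w \<in> D \<or> v \<in> D \<and> w = (\<lambda>_. 1)"
    using v w False by auto
  then show ?thesis
  proof (elim disjE conjE)
    assume "v = (\<lambda>_. 1)" "w \<in> D"
    then show ?thesis using bal[of w] False by (simp flip: cnj_sum)
  qed (use orth bal False in simp_all)
qed

lemma hadamard_plan_column_sum:
  assumes H: "hadamard_plan n D" and "n \<ge> 2" and a: "a < n" and b: "b < n"
  shows "(\<Sum>d\<in>D. d a * cnj (d b)) = (if a = b then of_nat n else 0) - 1"
proof -
  define D' where "D' = insert (\<lambda>_. 1) D"
  have fin: "finite D" and cD: "card D = n - 1" using H unfolding hadamard_plan_def by auto
  have one_notin: "(\<lambda>_. 1) \<notin> D"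
  proof
    assume "(\<lambda>_. 1) \<in> D"
    then have "(\<Sum>k<n. 1 :: complex) = 0" using H unfolding hadamard_plan_def by blast
    then show False using \<open>n \<ge> 2\<close> by simp
  qed
  have "card D' = n" using fin cD one_notin \<open>n \<ge> 2\<close> unfolding D'_def by auto
  then obtain h where h: "bij_betw h {0..<n} D'"
    using ex_bij_betw_nat_finite[of D'] fin unfolding D'_def by auto
  have rows: "(\<Sum>k<n. h r k * cnj (h s k)) = (if r = s then of_nat n else 0)"
    if "r < n" "s < n" for r s
  proof -
    have "h r \<in> D'" "h s \<in> D'" and "h r = h s \<longleftrightarrow> r = s"
      using h that unfolding bij_betw_def inj_on_def by auto
    then show ?thesis
      using hadamard_plan_extended_orthogonal[OF H, of "h r" "h s"] unfolding D'_def by simp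
  qed
  have "(\<Sum>r<n. cnj (h r b) * h r a) = (\<Sum>v\<in>D'. cnj (v b) * v a)"
    using sum.reindex_bij_betw[OF h, of "\<lambda>v. cnj (v b) * v a"] by (simp add: atLeast0LessThan)
  also have "\<dots> = 1 + (\<Sum>d\<in>D. cnj (d b) * d a)"
    unfolding D'_def using fin one_notin by simp
  finally show ?thesis
    using orthogonal_rows_imp_orthogonal_cols[of n h "of_nat n" b a, OF rows] \<open>n \<ge> 2\<close> a b
    by (simp add: algebra_simps)
qed

lemma sum_shift_mod:
  assumes "0 < (l::nat)"
  shows "(\<Sum>j<l. h ((j + c) mod l)) = (\<Sum>j<l. h j)"
proof -
  have inj: "inj_on (\<lambda>j. (j + c) mod l) {..<l}"
  proof (rule inj_onI)
    fix x y assume "x \<in> {..<l}" "y \<in> {..<l}" "(x + c) mod l = (y + c) mod l"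
    then show "x = y" using cong_add_rcancel_nat cong_less_modulus_unique_nat
      unfolding cong_def by (metis lessThan_iff)
  qed
  have "(\<lambda>j. (j + c) mod l) ` {..<l} = {..<l}"
    by (rule endo_inj_surj) (use inj assms in auto)
  then show ?thesis using sum.reindex[OF inj, of h] by simp
qed

lemma sum_norm_pcorr_sq:
  assumes "0 < (l::nat)"
  shows "(\<Sum>s<l. complex_of_real ((cmod (pcorr l f g s))^2)) = (\<Sum>s<l. pcorr l f f s * cnj (pcorr l g g s))"
proof -
  define T where "T s j k = f ((j + s) mod l) * cnj (g j) * (cnj (f ((k + s) mod l)) * g k)" for s j k
  define U where "U t a k = f ((a + t) mod l) * cnj (f a) * (cnj (g ((k + t) mod l)) * g k)" for t a k
  have "(\<Sum>s<l. complex_of_real ((cmod (pcorr l f g s))^2)) = (\<Sum>s<l. pcorr l f g s * cnj (pcorr l f g s))"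
    by (simp only: complex_norm_square)
  also have "\<dots> = (\<Sum>s<l. \<Sum>j<l. \<Sum>k<l. T s j k)"
    unfolding pcorr_def T_def by (simp add: sum_product)
  also have "\<dots> = (\<Sum>s<l. \<Sum>k<l. \<Sum>j<l. T s j k)"
    by (rule sum.cong[OF refl], rule sum.swap)
  also have "\<dots> = (\<Sum>k<l. \<Sum>s<l. \<Sum>j<l. T s j k)"
    by (rule sum.swap)
  also have "\<dots> = (\<Sum>k<l. \<Sum>t<l. \<Sum>a<l. U t a k)"
  proof (rule sum.cong[OF refl])
    fix k assume "k \<in> {..<l}"
    then have k: "k < l" by simp
    \<comment> \<open>substitute \<open>j = t + k\<close> and \<open>s = a - k\<close>, so that \<open>j + s = a + t\<close> and \<open>k + s = a\<close>\<close>
    have "(\<Sum>s<l. \<Sum>j<l. T s j k) = (\<Sum>s<l. \<Sum>t<l. T s ((t + k) mod l) k)"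
      by (rule sum.cong[OF refl]) (rule sum_shift_mod[OF assms, symmetric])
    also have "\<dots> = (\<Sum>t<l. \<Sum>s<l. T s ((t + k) mod l) k)"
      by (rule sum.swap)
    also have "\<dots> = (\<Sum>t<l. \<Sum>a<l. T ((a + (l - k)) mod l) ((t + k) mod l) k)"
      by (rule sum.cong[OF refl]) (rule sum_shift_mod[OF assms, symmetric])
    also have "\<dots> = (\<Sum>t<l. \<Sum>a<l. U t a k)"
    proof (intro sum.cong refl)
      fix t a assume "a \<in> {..<l}"
      have "t + k + (a + (l - k)) = (a + t) + l" "k + (a + (l - k)) = a + l" using k by simp_all
      then have "((t + k) mod l + (a + (l - k)) mod l) mod l = (a + t) mod l"
        and "(k + (a + (l - k)) mod l) mod l = a"
        using \<open>a \<in> {..<l}\<close> by (metis mod_add_eq mod_add_self2, metis mod_add_right_eq mod_add_self2 mod_less lessThan_iff)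
      then show "T ((a + (l - k)) mod l) ((t + k) mod l) k = U t a k"
        unfolding T_def U_def by (simp add: add.commute mult.commute mult.left_commute)
    qed
    finally show "(\<Sum>s<l. \<Sum>j<l. T s j k) = (\<Sum>t<l. \<Sum>a<l. U t a k)" .
  qed
  also have "\<dots> = (\<Sum>t<l. \<Sum>k<l. \<Sum>a<l. U t a k)"
    by (rule sum.swap)
  also have "\<dots> = (\<Sum>t<l. \<Sum>a<l. \<Sum>k<l. U t a k)"
    by (rule sum.cong[OF refl], rule sum.swap)
  also have "\<dots> = (\<Sum>s<l. pcorr l f f s * cnj (pcorr l g g s))"
    unfolding pcorr_def U_def by (simp add: sum_product)
  finally show ?thesis .
qed

lemma pcdf_set_eq_sum_norm_pcorr:
  assumes "0 < l" and "\<And>f. f \<in> F \<Longrightarrow> pcorr l f f 0 = E"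
  shows "pcdf_set l F =
    complex_of_real (\<Sum>s<l. (cmod (\<Sum>f\<in>F. pcorr l f f s))^2) / (E * E * of_nat (card F)^2)"
proof -
  have "pcdf_pair l f g = (\<Sum>s<l. pcorr l f f s * cnj (pcorr l g g s)) / (E * E)"
    if "f \<in> F" "g \<in> F" for f g
    unfolding pcdf_pair_def sum_norm_pcorr_sq[OF assms(1)] using assms(2) that by simp
  then have "(\<Sum>f\<in>F. \<Sum>g\<in>F. pcdf_pair l f g) =
        (\<Sum>f\<in>F. \<Sum>g\<in>F. \<Sum>s<l. pcorr l f f s * cnj (pcorr l g g s)) / (E * E)"
    by (simp add: sum_divide_distrib)
  also have "(\<Sum>f\<in>F. \<Sum>g\<in>F. \<Sum>s<l. pcorr l f f s * cnj (pcorr l g g s)) =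
             (\<Sum>s<l. \<Sum>f\<in>F. \<Sum>g\<in>F. pcorr l f f s * cnj (pcorr l g g s))"
    by (rule trans[OF sum.cong[OF refl] sum.swap], rule sum.swap)
  also have "\<dots> = (\<Sum>s<l. (\<Sum>f\<in>F. pcorr l f f s) * cnj (\<Sum>g\<in>F. pcorr l g g s))"
    by (simp add: sum_product)
  also have "\<dots> = complex_of_real (\<Sum>s<l. (cmod (\<Sum>f\<in>F. pcorr l f f s))^2)"
    by (simp only: of_real_sum complex_norm_square)
  finally show ?thesis unfolding pcdf_set_def by (simp add: field_simps)
qed

lemma card_multiples_below:
  assumes "0 < (n::nat)" and "n dvd m"
  shows "card {e. e < m \<and> n dvd e} = m div n"
proof -
  have "{e. e < m \<and> n dvd e} = (\<lambda>i. n * i) ` {..<m div n}"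
  proof (intro equalityI subsetI)
    fix e assume "e \<in> {e. e < m \<and> n dvd e}"
    then obtain i where "e = n * i" "n * i < n * (m div n)" using assms by auto
    then show "e \<in> (\<lambda>i. n * i) ` {..<m div n}" by auto
  next
    fix e assume "e \<in> (\<lambda>i. n * i) ` {..<m div n}"
    then obtain i where "e = n * i" "i < m div n" by auto
    moreover have "n * i < n * (m div n)" using \<open>i < m div n\<close> assms(1) by simp
    ultimately show "e \<in> {e. e < m \<and> n dvd e}" using assms(2) by simp
  qed
  moreover have "inj_on (\<lambda>i. n * i) {..<m div n}" using assms(1) by (auto simp: inj_on_def)
  ultimately show ?thesis by (simp add: card_image)
qed

locale cyclotomy =
  fixes p n g :: nat
  assumes prime: "prime p" and primroot: "residue_primroot p g"
    and n_ge_2: "n \<ge> 2" and n_dvd: "n dvd p - 1"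
begin

lemma p_ge_2: "p \<ge> 2"
  using prime prime_ge_2_nat by blast

lemma n_le: "n \<le> p - 1"
  using n_dvd p_ge_2 dvd_imp_le by simp

lemma power_bij: "bij_betw (\<lambda>i. g ^ i mod p) {..<p - 1} {0<..<p}"
  using residue_primroot_is_generator[OF _ primroot] p_ge_2 prime totient_prime totatives_prime by force

lemma power_cong_iff: "[g ^ a = g ^ b] (mod p) \<longleftrightarrow> [a = b] (mod (p - 1))"
  using order_divides_expdiff[of p g] primroot prime totient_prime by (simp add: residue_primroot_def)

lemma not_dvd_power: "\<not> p dvd g ^ e"
proof
  assume "p dvd g ^ e"
  then have "p dvd g" using prime prime_dvd_power by blast
  then show False using primroot p_ge_2 coprime_absorb_left[of p g] by (simp add: residue_primroot_def)
qed

lemma not_dvd_mult: "\<not> p dvd x \<Longrightarrow> \<not> p dvd y \<Longrightarrow> \<not> p dvd (x * y)"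
  using prime prime_dvd_mult_iff by blast

lemma coprime_if_less: "0 < x \<Longrightarrow> x < p \<Longrightarrow> coprime p x"
  by (rule prime_imp_coprime[OF prime]) (auto dest: dvd_imp_le)

definition dlog :: "nat \<Rightarrow> nat" where
  "dlog h = (THE e. e < p - 1 \<and> [g ^ e = h] (mod p))"

lemma dlog_ex1:
  assumes "\<not> p dvd h"
  shows "\<exists>!e. e < p - 1 \<and> [g ^ e = h] (mod p)"
proof -
  have img: "(\<lambda>i. g ^ i mod p) ` {..<p - 1} = {0<..<p}" and inj: "inj_on (\<lambda>i. g ^ i mod p) {..<p - 1}"
    using power_bij by (simp_all add: bij_betw_def)
  have "h mod p \<in> {0<..<p}" using assms p_ge_2 by (simp add: dvd_eq_mod_eq_0)
  then obtain e where e: "e < p - 1" "h mod p = g ^ e mod p"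
    unfolding img[symmetric] by auto
  have "e' = e" if "e' < p - 1" "[g ^ e' = h] (mod p)" for e'
    using inj_onD[OF inj, of e' e] that e unfolding cong_def by simp
  then show ?thesis using e by (intro ex1I[of _ e]) (auto simp: cong_def)
qed

lemma dlog_less: "\<not> p dvd h \<Longrightarrow> dlog h < p - 1"
  and dlog_cong: "\<not> p dvd h \<Longrightarrow> [g ^ dlog h = h] (mod p)"
  using theI'[OF dlog_ex1] unfolding dlog_def by auto

lemma dlog_unique:
  assumes "e < p - 1" "[g ^ e = h] (mod p)"
  shows "dlog h = e"
proof -
  have "\<not> p dvd h" using assms(2) not_dvd_power cong_dvd_iff by blast
  then show ?thesis unfolding dlog_def using dlog_ex1 assms by (intro the1_equality) auto
qed

lemma dlog_mod [simp]: "dlog (h mod p) = dlog h"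
  by (simp add: dlog_def cong_def)

lemma dlog_mult_mod:
  assumes "\<not> p dvd x" "\<not> p dvd y"
  shows "dlog (x * y) mod n = (dlog x + dlog y) mod n"
proof -
  have "[g ^ (dlog x + dlog y) = x * y] (mod p)"
    using dlog_cong[OF assms(1)] dlog_cong[OF assms(2)] by (simp add: power_add cong_mult)
  then have "[g ^ dlog (x * y) = g ^ (dlog x + dlog y)] (mod p)"
    using dlog_cong[OF not_dvd_mult[OF assms]] by (blast intro: cong_trans cong_sym)
  then have "[dlog (x * y) = dlog x + dlog y] (mod (p - 1))" using power_cong_iff by blast
  then show ?thesis using n_dvd cong_dvd_modulus_nat unfolding cong_def by blast
qed

lemma same_class_iff:
  assumes "\<not> p dvd c" "\<not> p dvd j"
  shows "dlog (c * j) mod n = dlog j mod n \<longleftrightarrow> n dvd dlog c"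
proof -
  have "dlog (c * j) mod n = dlog j mod n \<longleftrightarrow> [dlog c + dlog j = 0 + dlog j] (mod n)"
    using dlog_mult_mod[OF assms] by (simp add: cong_def)
  also have "\<dots> \<longleftrightarrow> n dvd dlog c"
    using cong_add_rcancel_nat cong_0_iff by blast
  finally show ?thesis .
qed

lemma cyc_coset_iff:
  assumes "k < n"
  shows "h \<in> cyc_coset p n g k \<longleftrightarrow> h \<in> {1..<p} \<and> dlog h mod n = k"
proof
  assume "h \<in> cyc_coset p n g k"
  then obtain x where x: "[h = g ^ k * x ^ n] (mod p)" "\<not> p dvd x" and h: "h \<in> {1..<p}"
    unfolding cyc_coset_def by auto
  have "\<not> p dvd h" using h by (auto dest: dvd_imp_le)
  have "[g ^ k * x ^ n = g ^ k * (g ^ dlog x) ^ n] (mod p)"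
    using dlog_cong[OF x(2)] by (simp add: cong_mult cong_pow cong_sym)
  also have "g ^ k * (g ^ dlog x) ^ n = g ^ (k + n * dlog x)"
    by (simp add: power_add power_mult[symmetric] mult.commute)
  finally have "[g ^ dlog h = g ^ (k + n * dlog x)] (mod p)"
    using dlog_cong[OF \<open>\<not> p dvd h\<close>] x(1) by (blast intro: cong_trans)
  then have "[dlog h = k + n * dlog x] (mod (p - 1))" using power_cong_iff by blast
  then have "[dlog h = k + n * dlog x] (mod n)" using n_dvd cong_dvd_modulus_nat by blast
  then show "h \<in> {1..<p} \<and> dlog h mod n = k" using h assms by (simp add: cong_def)
next
  assume h: "h \<in> {1..<p} \<and> dlog h mod n = k"
  then have "dlog h = k + n * (dlog h div n)" by (metis mod_mult_div_eq)
  then have "g ^ dlog h = g ^ (k + n * (dlog h div n))" by (rule arg_cong)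
  also have "\<dots> = g ^ k * (g ^ (dlog h div n)) ^ n"
    by (simp add: power_add power_mult[symmetric] mult.commute)
  finally have "g ^ dlog h = g ^ k * (g ^ (dlog h div n)) ^ n" .
  moreover have "\<not> p dvd h" using h by (auto dest: dvd_imp_le)
  ultimately have "[h = g ^ k * (g ^ (dlog h div n)) ^ n] (mod p)"
    using dlog_cong cong_sym by metis
  then show "h \<in> cyc_coset p n g k" using h not_dvd_power unfolding cyc_coset_def by blast
qed

lemma cyc_seq_eq: "cyc_seq p n g d h = (if h mod p = 0 then 0 else d (dlog h mod n))"
proof -
  have "(THE k. k < n \<and> h mod p \<in> cyc_coset p n g k) = dlog h mod n" if "h mod p \<noteq> 0"
    using that p_ge_2 n_ge_2 by (intro the_equality) (auto simp: cyc_coset_iff)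
  then show ?thesis by (simp add: cyc_seq_def)
qed

definition nth_residues :: "nat set" where
  "nth_residues = {t \<in> {1..<p}. n dvd dlog t}"

lemma card_nth_residues: "card nth_residues = (p - 1) div n"
proof -
  have "nth_residues = (\<lambda>i. g ^ i mod p) ` {e. e < p - 1 \<and> n dvd e}"
  proof safe
    fix t assume "t \<in> nth_residues"
    then have t: "t \<in> {1..<p}" "n dvd dlog t" unfolding nth_residues_def by auto
    then have "\<not> p dvd t" by (auto dest: dvd_imp_le)
    then have "dlog t < p - 1" "g ^ dlog t mod p = t" using dlog_less dlog_cong t(1) by (auto simp: cong_def)
    then show "t \<in> (\<lambda>i. g ^ i mod p) ` {e. e < p - 1 \<and> n dvd e}" using t by force
  next
    fix e assume e: "e < p - 1" "n dvd e"
    have "g ^ e mod p \<in> {0<..<p}" using power_bij e unfolding bij_betw_def by auto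
    moreover have "dlog (g ^ e mod p) = e" using dlog_unique[OF e(1)] by (simp add: cong_def)
    ultimately show "g ^ e mod p \<in> nth_residues" using e unfolding nth_residues_def by auto
  qed
  moreover have "inj_on (\<lambda>i. g ^ i mod p) {e. e < p - 1 \<and> n dvd e}"
    using power_bij unfolding bij_betw_def by (auto intro: inj_on_subset)
  ultimately show ?thesis using card_multiples_below[OF _ n_dvd] n_ge_2 by (simp add: card_image)
qed

lemma one_in_nth_residues: "1 \<in> nth_residues"
  using dlog_unique[of 0 1] p_ge_2 unfolding nth_residues_def by simp

lemma shifted_same_class_iff:
  assumes j: "0 < j" "j < p" and c: "1 < c" "c < p" and sol: "[(c - 1) * j = s] (mod p)"
  shows "(j + s) mod p \<noteq> 0 \<and> dlog (j + s) mod n = dlog j mod n \<longleftrightarrow> n dvd dlog c"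
proof -
  have "c * j = (c - 1) * j + j" using c by (simp add: algebra_simps)
  then have "[c * j = j + s] (mod p)" using cong_add[OF sol cong_refl[of j]] by (simp add: add.commute)
  then have eq: "(j + s) mod p = (c * j) mod p" by (simp add: cong_def)
  have nd: "\<not> p dvd c" "\<not> p dvd j" using c j by (auto dest: dvd_imp_le)
  then have "(c * j) mod p \<noteq> 0" using not_dvd_mult by (simp add: dvd_eq_mod_eq_0)
  moreover have "dlog (j + s) = dlog (c * j)" by (metis eq dlog_mod)
  ultimately show ?thesis using eq same_class_iff[OF nd] by simp
qed

text \<open>Cyclotomic number \<open>(0,0)\<close>: for \<open>s \<noteq> 0\<close>, \<open>j\<close> and \<open>j + s\<close> lie in the same class
  iff \<open>j = s / (c - 1)\<close> for an \<open>n\<close>-th power \<open>c \<noteq> 1\<close>.\<close>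
definition shift_solution :: "nat \<Rightarrow> nat \<Rightarrow> nat" where
  "shift_solution s c = (THE j. 0 < j \<and> j < p \<and> [(c - 1) * j = s] (mod p))"

lemma shift_solution_ex1:
  assumes "0 < s" "s < p" "1 < c" "c < p"
  shows "\<exists>!j. 0 < j \<and> j < p \<and> [(c - 1) * j = s] (mod p)"
  using cong_solve_unique_nontrivial[OF prime coprime_if_less[OF assms(1,2)]] assms(3,4) by simp

lemma shift_solution:
  assumes "0 < s" "s < p" "1 < c" "c < p"
  shows "0 < shift_solution s c" "shift_solution s c < p" "[(c - 1) * shift_solution s c = s] (mod p)"
  using theI'[OF shift_solution_ex1[OF assms]] unfolding shift_solution_def by auto

lemma shift_solution_unique:
  assumes "0 < s" "s < p" "1 < c" "c < p" "0 < j" "j < p" "[(c - 1) * j = s] (mod p)"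
  shows "shift_solution s c = j"
  using shift_solution_ex1[OF assms(1-4)] shift_solution[OF assms(1-4)] assms(5-7) by blast

lemma inj_on_shift_solution:
  assumes "0 < s" "s < p"
  shows "inj_on (shift_solution s) {1<..<p}"
proof (rule inj_onI)
  fix c c' assume c: "c \<in> {1<..<p}" "c' \<in> {1<..<p}" and eq: "shift_solution s c = shift_solution s c'"
  note sol = shift_solution[OF assms, of c] shift_solution[OF assms, of c']
  have "coprime p (shift_solution s c)" using coprime_if_less sol c by auto
  then have "coprime (shift_solution s c) p" using coprime_commute by blast
  moreover have "[shift_solution s c * (c - 1) = shift_solution s c * (c' - 1)] (mod p)"
    using sol c eq by (simp add: cong_def mult.commute)
  ultimately have "[c - 1 = c' - 1] (mod p)" using cong_mult_lcancel_nat by blast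
  then show "c = c'" using c cong_less_modulus_unique_nat by fastforce
qed

lemma card_same_class_shift:
  assumes s: "0 < s" "s < p"
  shows "card {j \<in> {1..<p}. (j + s) mod p \<noteq> 0 \<and> dlog (j + s) mod n = dlog j mod n} = (p - 1) div n - 1"
    (is "card ?S = _")
proof -
  define T where "T = nth_residues - {1}"
  have T: "T = {c \<in> {1<..<p}. n dvd dlog c}" unfolding T_def nth_residues_def by auto
  have "shift_solution s ` T = ?S"
  proof (intro equalityI subsetI)
    fix j assume "j \<in> shift_solution s ` T"
    then obtain c where c: "1 < c" "c < p" "n dvd dlog c" and "j = shift_solution s c"
      unfolding T by auto
    then show "j \<in> ?S" using shift_solution[OF s c(1,2)] shifted_same_class_iff[OF _ _ c(1,2)] by auto
  next
    fix j assume "j \<in> ?S"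
    then have j: "0 < j" "j < p" "(j + s) mod p \<noteq> 0" "dlog (j + s) mod n = dlog j mod n" by auto
    have "coprime p (j + s)" using j(3) by (intro prime_imp_coprime[OF prime]) (simp add: dvd_eq_mod_eq_0)
    then obtain c where c: "0 < c" "c < p" "[j * c = j + s] (mod p)"
      using cong_solve_unique_nontrivial[OF prime _ j(1,2)] by blast
    have "c \<noteq> 1"
    proof
      assume "c = 1"
      then have "[j + 0 = j + s] (mod p)" using c by simp
      then have "[0 = s] (mod p)" using cong_add_lcancel_nat by blast
      then show False using s by (simp add: cong_def)
    qed
    have "j * c = (c - 1) * j + j" using c \<open>c \<noteq> 1\<close> by (cases c) (auto simp: algebra_simps)
    then have sol: "[(c - 1) * j = s] (mod p)"
      using c(3) cong_add_rcancel_nat by (metis add.commute)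
    have "1 < c" using c \<open>c \<noteq> 1\<close> by simp
    then have "c \<in> T" using shifted_same_class_iff[OF j(1,2) _ c(2) sol] j c(2) unfolding T by simp
    moreover have "j = shift_solution s c" using shift_solution_unique[OF s \<open>1 < c\<close> c(2) j(1,2) sol] ..
    ultimately show "j \<in> shift_solution s ` T" by (rule rev_image_eqI)
  qed
  moreover have "inj_on (shift_solution s) T"
    by (rule inj_on_subset[OF inj_on_shift_solution[OF s]]) (auto simp: T)
  ultimately have "card ?S = card T" by (metis card_image)
  also have "\<dots> = (p - 1) div n - 1"
    unfolding T_def using card_nth_residues one_in_nth_residues by (simp add: nth_residues_def)
  finally show ?thesis .
qed

lemma pcorr_cyc_seq_zero:
  assumes "\<And>k. k < n \<Longrightarrow> cmod (d k) = 1"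
  shows "pcorr p (cyc_seq p n g d) (cyc_seq p n g d) 0 = of_nat (p - 1)"
proof -
  have "pcorr p (cyc_seq p n g d) (cyc_seq p n g d) 0 = (\<Sum>j\<in>{1..<p}. 1)"
    unfolding pcorr_def using assms n_ge_2 unimodular_mult_cnj
    by (intro sum.mono_neutral_cong_right) (auto simp: cyc_seq_eq)
  then show ?thesis by simp
qed

lemma inj_on_cyc_seq: "inj_on (cyc_seq p n g) {d. cyc_pattern n d}"
proof (rule inj_onI)
  fix d e assume "d \<in> {d. cyc_pattern n d}" "e \<in> {d. cyc_pattern n d}"
    and de: "cyc_seq p n g d = cyc_seq p n g e"
  show "d = e"
  proof
    fix k
    show "d k = e k"
    proof (cases "k < n")
      case True
      then have "dlog (g ^ k mod p) = k" using n_le dlog_unique[of k] by (simp add: cong_def)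
      moreover have "g ^ k mod p mod p \<noteq> 0" using not_dvd_power[of k] by (simp add: dvd_eq_mod_eq_0)
      ultimately show ?thesis
        using fun_cong[OF de, of "g ^ k mod p"] True by (simp add: cyc_seq_eq)
    qed (use \<open>d \<in> _\<close> \<open>e \<in> _\<close> in \<open>simp add: cyc_pattern_def\<close>)
  qed
qed

lemma sum_pcorr_cyc_seq_count:
  assumes H: "hadamard_plan n D" and "s < p"
  defines "A \<equiv> {j \<in> {1..<p}. (j + s) mod p \<noteq> 0}"
  shows "(\<Sum>d\<in>D. pcorr p (cyc_seq p n g d) (cyc_seq p n g d) s) =
    of_nat n * of_nat (card {j \<in> A. dlog (j + s) mod n = dlog j mod n}) - of_nat (card A)"
proof -
  define X where "X j = (if dlog (j + s) mod n = dlog j mod n then of_nat n else (0 :: complex)) - 1" for j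
  have "(\<Sum>d\<in>D. cyc_seq p n g d ((j + s) mod p) * cnj (cyc_seq p n g d j)) = (if j \<in> A then X j else 0)"
    if "j < p" for j
    using that hadamard_plan_column_sum[OF H n_ge_2, of "dlog (j + s) mod n" "dlog j mod n"] n_ge_2
    by (auto simp: cyc_seq_eq A_def X_def)
  then have "(\<Sum>d\<in>D. pcorr p (cyc_seq p n g d) (cyc_seq p n g d) s) = (\<Sum>j<p. if j \<in> A then X j else 0)"
    unfolding pcorr_def by (subst sum.swap) simp
  also have "\<dots> = (\<Sum>j\<in>A. X j)"
    by (rule sum.mono_neutral_cong_right) (auto simp: A_def)
  also have "\<dots> = of_nat n * of_nat (card {j \<in> A. dlog (j + s) mod n = dlog j mod n}) - of_nat (card A)"
    unfolding X_def by (simp add: sum_subtractf sum.If_cases Int_def A_def conj_assoc)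
  finally show ?thesis .
qed

lemma nonzero_shift_set:
  assumes "0 < s" "s < p"
  shows "{j \<in> {1..<p}. (j + s) mod p \<noteq> 0} = {1..<p} - {p - s}"
proof -
  have "(j + s) mod p = 0 \<longleftrightarrow> j = p - s" if "0 < j" "j < p" for j
  proof
    assume "(j + s) mod p = 0"
    then obtain k where k: "j + s = p * k" by (auto simp: dvd_eq_mod_eq_0[symmetric])
    have "p * k < p * 2" using k that assms by linarith
    then have "k = 1" using k that by (cases k) auto
    then show "j = p - s" using k by simp
  qed (use assms in simp)
  then show ?thesis by (auto simp: Suc_le_eq simp del: mod_eq_0_iff_dvd) (metis gr0I)
qed

lemma sum_pcorr_cyc_seq:
  assumes H: "hadamard_plan n D" and "s < p"
  shows "(\<Sum>d\<in>D. pcorr p (cyc_seq p n g d) (cyc_seq p n g d) s) =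
           (if s = 0 then of_nat (n - 1) * of_nat (p - 1) else 1 - of_nat n)"
proof (cases "s = 0")
  case True
  have "{j \<in> {1..<p}. (j + s) mod p \<noteq> 0} = {1..<p}" using True by auto
  with sum_pcorr_cyc_seq_count[OF assms]
  have "(\<Sum>d\<in>D. pcorr p (cyc_seq p n g d) (cyc_seq p n g d) s) = of_nat n * of_nat (p - 1) - of_nat (p - 1)"
    using True by simp
  then show ?thesis using True n_ge_2 by (simp add: of_nat_diff algebra_simps)
next
  case False
  then have s: "0 < s" "s < p" using assms by auto
  have card_S: "card {j \<in> {j \<in> {1..<p}. (j + s) mod p \<noteq> 0}. dlog (j + s) mod n = dlog j mod n} = (p - 1) div n - 1"
    using card_same_class_shift[OF s] by (simp add: conj_assoc)
  have card_A: "card {j \<in> {1..<p}. (j + s) mod p \<noteq> 0} = p - 2"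
    using nonzero_shift_set[OF s] s by simp
  obtain q where q: "p - 1 = n * q" using n_dvd by blast
  then have "q \<ge> 1" using p_ge_2 by (cases q) auto
  have "p = n * q + 1" using q p_ge_2 by simp
  then have "(of_nat p :: complex) = of_nat n * of_nat q + 1" by simp
  then show ?thesis
    using sum_pcorr_cyc_seq_count[OF assms] card_S card_A q \<open>q \<ge> 1\<close> n_ge_2 p_ge_2 False
    by (simp add: of_nat_diff algebra_simps)
qed

lemma sum_norm_sum_pcorr_cyc_seq:
  assumes H: "hadamard_plan n D"
  defines "V \<equiv> \<lambda>s. \<Sum>d\<in>D. pcorr p (cyc_seq p n g d) (cyc_seq p n g d) s"
  shows "(\<Sum>s\<in>{1..<p}. (cmod (V s))^2) = real (p - 1) * real (n - 1)^2"
    and "(\<Sum>s<p. (cmod (V s))^2) = real p * real (p - 1) * real (n - 1)^2"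
proof -
  have "cmod (1 - of_nat n :: complex) = real (n - 1)"
    using norm_of_real[of "1 - real n"] n_ge_2 by (simp add: of_nat_diff)
  then have "(cmod (V s))^2 = real (n - 1)^2" if "s \<in> {1..<p}" for s
    using that sum_pcorr_cyc_seq[OF H, of s] unfolding V_def by simp
  then show nonzero: "(\<Sum>s\<in>{1..<p}. (cmod (V s))^2) = real (p - 1) * real (n - 1)^2"
    by simp
  have "cmod (V 0) = real (n - 1) * real (p - 1)"
    using sum_pcorr_cyc_seq[OF H, of 0] p_ge_2 norm_of_real[of "real (n - 1) * real (p - 1)"]
    unfolding V_def by simp
  moreover have "{..<p} = insert 0 {1..<p}" using p_ge_2 by auto
  ultimately have "(\<Sum>s<p. (cmod (V s))^2) = (real (n - 1) * real (p - 1))^2 + real (p - 1) * real (n - 1)^2"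
    using nonzero by simp
  also have "\<dots> = real p * real (p - 1) * real (n - 1)^2"
    using p_ge_2 by (simp add: of_nat_diff power2_eq_square algebra_simps)
  finally show "(\<Sum>s<p. (cmod (V s))^2) = real p * real (p - 1) * real (n - 1)^2" .
qed

lemma periodic_codebook_reindex:
  assumes "\<forall>d\<in>D. cyc_pattern n d"
  shows "(\<Sum>f\<in>periodic_codebook p n g D. \<phi> f) = (\<Sum>d\<in>D. \<phi> (cyc_seq p n g d))"
    and "card (periodic_codebook p n g D) = card D"
proof -
  have "inj_on (cyc_seq p n g) D" by (rule inj_on_subset[OF inj_on_cyc_seq]) (use assms in auto)
  then show "(\<Sum>f\<in>periodic_codebook p n g D. \<phi> f) = (\<Sum>d\<in>D. \<phi> (cyc_seq p n g d))"
    and "card (periodic_codebook p n g D) = card D"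
    unfolding periodic_codebook_def by (simp_all add: sum.reindex card_image)
qed

end

theorem mainTheorem9:
  fixes n p \<alpha> :: nat and D :: "(nat \<Rightarrow> complex) set"
  assumes "n \<ge> 2"
    and "hadamard_plan n D"
    and "prime p" and "[p = 1] (mod n)"
    and "residue_primroot p \<alpha>"
  defines "F \<equiv> periodic_codebook p n \<alpha> D"
  shows "(\<forall>s<p. (\<Sum>f\<in>F. pcorr p f f s) =
            (if s = 0 then of_nat (n - 1) * of_nat (p - 1) else 1 - of_nat n))
     \<and> (\<Sum>s\<in>{1..<p}. (cmod (\<Sum>f\<in>F. pcorr p f f s))^2) = real (p - 1) * real (n - 1)^2
     \<and> (\<Sum>s<p. (cmod (\<Sum>f\<in>F. pcorr p f f s))^2) = real p * real (p - 1) * real (n - 1)^2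
     \<and> pcdf_set p F = of_nat p / of_nat (p - 1)"
proof -
  interpret cyclotomy p n \<alpha>
    using assms cong_to_1_nat by unfold_locales auto
  have H: "hadamard_plan n D" by fact
  then have pat: "\<forall>d\<in>D. cyc_pattern n d" and unim: "\<forall>d\<in>D. \<forall>k<n. cmod (d k) = 1"
    and "card D = n - 1" unfolding hadamard_plan_def by auto
  then have card_F: "card F = n - 1" unfolding F_def using periodic_codebook_reindex(2) by simp
  have sum_F: "(\<Sum>f\<in>F. pcorr p f f s) = (\<Sum>d\<in>D. pcorr p (cyc_seq p n \<alpha> d) (cyc_seq p n \<alpha> d) s)" for s
    unfolding F_def using periodic_codebook_reindex(1)[OF pat] .
  have "pcorr p f f 0 = of_nat (p - 1)" if "f \<in> F" for f
    using that unim pcorr_cyc_seq_zero unfolding F_def periodic_codebook_def by auto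
  then have "pcdf_set p F = of_real (real p * real (p - 1) * real (n - 1)^2)
      / (of_nat (p - 1) * of_nat (p - 1) * of_nat (n - 1)^2)"
    using pcdf_set_eq_sum_norm_pcorr[of p F] p_ge_2 card_F sum_norm_sum_pcorr_cyc_seq(2)[OF H]
    unfolding sum_F by simp
  also have "\<dots> = of_nat p / of_nat (p - 1)"
  proof -
    have "complex_of_real (real p * real q * real m ^ 2) / (of_nat q * of_nat q * of_nat m ^ 2)
        = of_nat p / of_nat q" if "q > 0" "m > 0" for q m
      using that by (simp add: field_simps power2_eq_square)
    then show ?thesis using p_ge_2 \<open>n \<ge> 2\<close> by simp
  qed
  finally show ?thesis
    using sum_pcorr_cyc_seq[OF H] sum_norm_sum_pcorr_cyc_seq[OF H] unfolding sum_F by simp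
qed

end
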